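(* Let $k$ be a positive integer. If $m$ and $n$ are positive integers with $m\equiv n\pmod k$, then $R_k^m\cong R_k^n$.
   Context: $\mathbb{N}=\{1,2,3,\dots\}$. $R$ denotes the ring of all $\mathbb{N}\times\mathbb{N}$ integer matrices with only finitely many nonzero entries in each row and each column, with entrywise addition and multiplication $(AB)_{i,j}=\sum_{l\ge1}a_{i,l}b_{l,j}$. Fix a positive integer $k$. Partition $\mathbb{N}$ into consecutive blocks $J_1=\{1\}$ and, for $m\ge2$, $J_m=\{2+k(m-2),\dots,1+k(m-1)\}$. For $A\in R$, the block $A^{m,n}$ is the submatrix with rows indexed by $J_m$ and columns by $J_n$. $R_k$ is the subring of $A\in R$ such that for all but finitely many pairs $(m,n)$ with $m,n\ge2$, $A^{m,n}=cI_k$ for some integer $c$. For a ring $S$, $S^n$ is the free left $S$-module of $n$-tuples with componentwise operations; $S^m\cong S^n$ means there is a bijective left-$S$-linear map $S^m\to S^n$, equivalently there exist $X\in M_{m\times n}(S)$, $Y\in M_{n\times m}(S)$ with $XY=I_m$, $YX=I_n$. *)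

theory Defs
  imports Main
begin

(* Matrices N x N are represented 0-indexed: paper index i (i >= 1) is position i - 1. *)
type_synonym imat = "nat \<Rightarrow> nat \<Rightarrow> int"

definition in_R :: "imat \<Rightarrow> bool" where
  "in_R A \<longleftrightarrow> (\<forall>i. finite {j. A i j \<noteq> 0}) \<and> (\<forall>j. finite {i. A i j \<noteq> 0})"

(* (AB)_{ij} = sum over l of a_{il} b_{lj}; the sum ranges over the (finite, for A in R)
   support of row i of A. *)
definition mmul :: "imat \<Rightarrow> imat \<Rightarrow> imat" where
  "mmul A B = (\<lambda>i j. \<Sum>l\<in>{l. A i l \<noteq> 0}. A i l * B l j)"

definition idR :: imat where
  "idR = (\<lambda>i j. if i = j then 1 else 0)"

(* Block A^{m,n} for m,n >= 2: rows J_m = {2+k(m-2),...,1+k(m-1)} (paper indexing),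
   i.e. 0-indexed positions 1+k(m-2)+a for a < k. *)
definition blk :: "nat \<Rightarrow> imat \<Rightarrow> nat \<Rightarrow> nat \<Rightarrow> nat \<Rightarrow> nat \<Rightarrow> int" where
  "blk k A m n a b = A (1 + k * (m - 2) + a) (1 + k * (n - 2) + b)"

definition in_Rk :: "nat \<Rightarrow> imat \<Rightarrow> bool" where
  "in_Rk k A \<longleftrightarrow> in_R A \<and>
     finite {(m, n). m \<ge> 2 \<and> n \<ge> 2 \<and>
        \<not> (\<exists>c::int. \<forall>a<k. \<forall>b<k. blk k A m n a b = (if a = b then c else 0))}"

(* R_k^m \<cong> R_k^n: exist X in M_{m x n}(R_k), Y in M_{n x m}(R_k) with XY = I_m, YX = I_n. *)
definition free_iso :: "nat \<Rightarrow> nat \<Rightarrow> nat \<Rightarrow> bool" where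
  "free_iso k m n \<longleftrightarrow> (\<exists>X Y :: nat \<Rightarrow> nat \<Rightarrow> imat.
     (\<forall>i<m. \<forall>j<n. in_Rk k (X i j)) \<and> (\<forall>i<n. \<forall>j<m. in_Rk k (Y i j)) \<and>
     (\<forall>i<m. \<forall>j<m. (\<lambda>r s. \<Sum>l<n. mmul (X i l) (Y l j) r s) = (if i = j then idR else (\<lambda>r s. 0))) \<and>
     (\<forall>i<n. \<forall>j<n. (\<lambda>r s. \<Sum>l<m. mmul (Y i l) (X l j) r s) = (if i = j then idR else (\<lambda>r s. 0))))"

end

theory Submission
  imports Defs
begin

text \<open>An isomorphism \<open>R\<^sub>k\<^sup>n \<cong> R\<^sub>k\<^sup>m\<close> can be given by "permutation matrices": view \<open>R\<^sub>k\<^sup>n\<close> as matrices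
  whose columns are indexed by \<open>{..<n} \<times> \<nat>\<close>. Any bijection \<open>g : {..<n} \<times> \<nat> \<rightarrow> {..<m} \<times> \<nat>\<close>
  yields mutually inverse matrices \<open>X\<close>, \<open>Y\<close> over \<open>R\<close>, and their entries lie in \<open>R\<^sub>k\<close> (all
  blocks are \<open>0\<close> or \<open>I\<^sub>k\<close>) as soon as \<open>g\<close> maps every \<open>k\<close>-block \<open>J\<^sub>q\<close> of a coordinate onto
  some \<open>k\<close>-block, preserving offsets. Such a \<open>g\<close> exists for \<open>n = m + t k\<close> by a Hilbert hotel
  argument: the \<open>1 + t k\<close> last coordinates are folded into one, their \<open>1 + t k\<close> first entries
  filling \<open>J\<^sub>1\<close> and the first \<open>t\<close> blocks, and their remaining blocks being interleaved.\<close>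

lemma mult_add_eq_mult_add_iff:
  fixes k q q' a b :: nat
  assumes "a < k" "b < k"
  shows "k * q + a = k * q' + b \<longleftrightarrow> q = q' \<and> a = b"
proof
  assume "k * q + a = k * q' + b"
  then have "(k * q + a) div k = (k * q' + b) div k" "(k * q + a) mod k = (k * q' + b) mod k"
    by simp_all
  with assms show "q = q' \<and> a = b" by simp
qed simp

definition scalar_block :: "nat \<Rightarrow> imat \<Rightarrow> nat \<Rightarrow> nat \<Rightarrow> bool" where
  "scalar_block k A p q \<longleftrightarrow> (\<exists>c::int. \<forall>a<k. \<forall>b<k. blk k A p q a b = (if a = b then c else 0))"

lemma in_Rk_iff:
  "in_Rk k A \<longleftrightarrow> in_R A \<and> finite {(p, q). p \<ge> 2 \<and> q \<ge> 2 \<and> \<not> scalar_block k A p q}"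
  unfolding in_Rk_def scalar_block_def ..

definition mtranspose :: "imat \<Rightarrow> imat" where
  "mtranspose A = (\<lambda>i j. A j i)"

lemma scalar_block_mtranspose: "scalar_block k (mtranspose A) p q \<longleftrightarrow> scalar_block k A q p"
  unfolding scalar_block_def blk_def mtranspose_def by (metis (no_types, opaque_lifting))

lemma in_Rk_mtranspose:
  assumes "in_Rk k A"
  shows "in_Rk k (mtranspose A)"
proof -
  have "{(p, q). p \<ge> 2 \<and> q \<ge> 2 \<and> \<not> scalar_block k (mtranspose A) p q}
      = prod.swap ` {(p, q). p \<ge> 2 \<and> q \<ge> 2 \<and> \<not> scalar_block k A p q}"
    by (auto simp: scalar_block_mtranspose image_iff)
  moreover have "in_R (mtranspose A)"
    using assms unfolding in_Rk_def in_R_def mtranspose_def by simp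
  ultimately show ?thesis
    using assms by (simp add: in_Rk_iff)
qed

subsection \<open>Permutation matrices of block-preserving bijections\<close>

text \<open>A pair \<open>(l, s)\<close> stands for position \<open>s\<close> of the \<open>l\<close>-th coordinate; \<open>perm_entry g i l\<close> is
  the \<open>(i, l)\<close> entry, an element of \<open>R\<close>, of the matrix of \<open>g\<close>.\<close>

definition perm_entry :: "(nat \<times> nat \<Rightarrow> nat \<times> nat) \<Rightarrow> nat \<Rightarrow> nat \<Rightarrow> imat" where
  "perm_entry g i l = (\<lambda>r s. if g (l, s) = (i, r) then 1 else 0)"

text \<open>Position \<open>1 + k q + b\<close> (with \<open>b < k\<close>) is the \<open>b\<close>-th entry of the block \<open>J\<^bsub>q+2\<^esub>\<close>.\<close>

definition block_preserving :: "nat \<Rightarrow> nat \<Rightarrow> (nat \<times> nat \<Rightarrow> nat \<times> nat) \<Rightarrow> bool" where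
  "block_preserving k n g \<longleftrightarrow>
     (\<forall>l<n. \<forall>q. \<exists>i h. \<forall>b<k. g (l, 1 + k * q + b) = (i, 1 + k * h + b))"

lemma in_R_perm_entry:
  assumes "inj (\<lambda>s. g (l, s))"
  shows "in_R (perm_entry g i l)"
  unfolding in_R_def
proof safe
  fix r
  have "{s. perm_entry g i l r s \<noteq> 0} = (\<lambda>s. g (l, s)) -` {(i, r)}"
    by (auto simp: perm_entry_def)
  then show "finite {s. perm_entry g i l r s \<noteq> 0}"
    using finite_vimageI[OF _ assms] by simp
next
  fix s
  have "{r. perm_entry g i l r s \<noteq> 0} \<subseteq> {snd (g (l, s))}"
    by (auto simp: perm_entry_def)
  then show "finite {r. perm_entry g i l r s \<noteq> 0}"
    by (rule finite_subset) simp
qed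

lemma scalar_block_perm_entry:
  assumes "block_preserving k n g" "l < n"
  shows "scalar_block k (perm_entry g i l) p q"
proof -
  obtain i' h where g: "\<forall>b<k. g (l, 1 + k * (q - 2) + b) = (i', 1 + k * h + b)"
    using assms unfolding block_preserving_def by blast
  have "blk k (perm_entry g i l) p q a b = (if a = b then (if i' = i \<and> h = p - 2 then 1 else 0) else 0)"
    if "a < k" "b < k" for a b
    using g that mult_add_eq_mult_add_iff[of b k a h "p - 2"]
    by (auto simp: blk_def perm_entry_def)
  then show ?thesis
    unfolding scalar_block_def by blast
qed

lemma in_Rk_perm_entry:
  assumes "inj_on g ({..<n} \<times> UNIV)" "block_preserving k n g" "l < n"
  shows "in_Rk k (perm_entry g i l)"
proof -
  have "inj (\<lambda>s. g (l, s))"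
    using assms(1,3) by (auto simp: inj_on_def)
  then show ?thesis
    using scalar_block_perm_entry[OF assms(2,3)] by (simp add: in_Rk_iff in_R_perm_entry)
qed

lemma mmul_single_support:
  assumes "{u. A r u \<noteq> 0} \<subseteq> {u0}"
  shows "mmul A B r s = A r u0 * B u0 s"
proof (cases "A r u0 = 0")
  case True
  with assms have "{u. A r u \<noteq> 0} = {}" by auto
  with True show ?thesis by (simp add: mmul_def)
next
  case False
  with assms have "{u. A r u \<noteq> 0} = {u0}" by auto
  then show ?thesis by (simp add: mmul_def)
qed

lemma perm_entry_mult_transpose:
  assumes g: "bij_betw g ({..<n} \<times> UNIV) ({..<m} \<times> UNIV)" and "i < m"
  shows "(\<Sum>l<n. mmul (perm_entry g i l) (mtranspose (perm_entry g j l)) r s)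
    = (if (i, r) = (j, s) then 1 else 0)"
proof -
  have "(i, r) \<in> g ` ({..<n} \<times> UNIV)"
    using bij_betw_imp_surj_on[OF g] \<open>i < m\<close> by simp
  then obtain p where "p \<in> {..<n} \<times> UNIV" "g p = (i, r)"
    by (rule imageE) simp
  then obtain l0 u0 where l0: "l0 < n" and gu0: "g (l0, u0) = (i, r)"
    by (cases p) simp
  have inj: "(l, u) = (l0, u0)" if "l < n" "g (l, u) = (i, r)" for l u
    using inj_onD[OF bij_betw_imp_inj_on[OF g], of "(l, u)" "(l0, u0)"] that l0 gu0 by simp
  have "mmul (perm_entry g i l) (mtranspose (perm_entry g j l)) r s
      = (if l = l0 then (if (i, r) = (j, s) then 1 else 0) else 0)" if "l < n" for l
  proof -
    have support: "{u. perm_entry g i l r u \<noteq> 0} \<subseteq> {u0}"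
      by (auto simp: perm_entry_def split: if_splits dest: inj[OF that])
    have "mmul (perm_entry g i l) (mtranspose (perm_entry g j l)) r s
        = perm_entry g i l r u0 * perm_entry g j l s u0"
      using mmul_single_support[where A = "perm_entry g i l", OF support]
      by (simp add: mtranspose_def)
    moreover have "g (l, u0) = (i, r) \<longleftrightarrow> l = l0"
      using inj[OF that, of u0] gu0 by blast
    ultimately show ?thesis
      using gu0 by (simp add: perm_entry_def)
  qed
  then have "(\<Sum>l<n. mmul (perm_entry g i l) (mtranspose (perm_entry g j l)) r s)
      = (\<Sum>l<n. if l = l0 then (if (i, r) = (j, s) then 1 else 0) else 0)"
    by (intro sum.cong) auto
  then show ?thesis
    using l0 by simp
qed

lemma transpose_mult_perm_entry:
  assumes g: "bij_betw g ({..<n} \<times> UNIV) ({..<m} \<times> UNIV)" and "i < n" "j < n"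
  shows "(\<Sum>l<m. mmul (mtranspose (perm_entry g l i)) (perm_entry g l j) r s)
    = (if (i, r) = (j, s) then 1 else 0)"
proof -
  obtain l0 u0 where gir: "g (i, r) = (l0, u0)" by fastforce
  have l0: "l0 < m"
    using \<open>i < n\<close> gir bij_betw_apply[OF g, of "(i, r)"] by auto
  have "mmul (mtranspose (perm_entry g l i)) (perm_entry g l j) r s
      = (if l = l0 then (if g (j, s) = (l0, u0) then 1 else 0) else 0)" for l
  proof -
    have support: "{u. mtranspose (perm_entry g l i) r u \<noteq> 0} \<subseteq> {u0}"
      using gir by (auto simp: perm_entry_def mtranspose_def)
    have "mmul (mtranspose (perm_entry g l i)) (perm_entry g l j) r s
        = perm_entry g l i u0 r * perm_entry g l j u0 s"
      using mmul_single_support[where A = "mtranspose (perm_entry g l i)", OF support]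
      by (simp add: mtranspose_def)
    then show ?thesis
      using gir by (auto simp: perm_entry_def)
  qed
  then have "(\<Sum>l<m. mmul (mtranspose (perm_entry g l i)) (perm_entry g l j) r s)
      = (if g (j, s) = g (i, r) then 1 else 0)"
    using l0 gir by simp
  also have "\<dots> = (if (i, r) = (j, s) then 1 else 0)"
    using bij_betw_imp_inj_on[OF g] assms(2,3) by (auto simp: inj_on_def)
  finally show ?thesis .
qed

lemma free_iso_if_block_preserving_bij:
  assumes "bij_betw g ({..<n} \<times> UNIV) ({..<m} \<times> UNIV)" "block_preserving k n g"
  shows "free_iso k m n"
  unfolding free_iso_def
proof (intro exI conjI allI impI)
  have inj: "inj_on g ({..<n} \<times> UNIV)"
    using assms(1) by (rule bij_betw_imp_inj_on)
  show "in_Rk k (perm_entry g i l)" if "i < m" "l < n" for i l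
    using in_Rk_perm_entry[OF inj assms(2) \<open>l < n\<close>] .
  show "in_Rk k (mtranspose (perm_entry g j l))" if "l < n" "j < m" for l j
    using in_Rk_mtranspose[OF in_Rk_perm_entry[OF inj assms(2) \<open>l < n\<close>]] .
  show "(\<lambda>r s. \<Sum>l<n. mmul (perm_entry g i l) (mtranspose (perm_entry g j l)) r s)
      = (if i = j then idR else (\<lambda>r s. 0))" if "i < m" "j < m" for i j
    using perm_entry_mult_transpose[OF assms(1) \<open>i < m\<close>] by (auto simp: idR_def)
  show "(\<lambda>r s. \<Sum>l<m. mmul (mtranspose (perm_entry g l i)) (perm_entry g l j) r s)
      = (if i = j then idR else (\<lambda>r s. 0))" if "i < n" "j < n" for i j
    using transpose_mult_perm_entry[OF assms(1) that] by (auto simp: idR_def)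
qed

subsection \<open>Folding \<open>1 + t k\<close> coordinates into one\<close>

text \<open>Position \<open>0\<close> of the \<open>c\<close>-th coordinate goes to position \<open>c \<le> t k\<close>, filling \<open>J\<^sub>1\<close> and the
  first \<open>t\<close> blocks; block \<open>q\<close> of the \<open>c\<close>-th coordinate goes to block \<open>t + (1 + t k) q + c\<close>.\<close>

definition fold_coord :: "nat \<Rightarrow> nat \<Rightarrow> nat \<Rightarrow> nat \<Rightarrow> nat" where
  "fold_coord k t c s =
     (if s = 0 then c else 1 + k * (t + (1 + t * k) * ((s - 1) div k) + c) + (s - 1) mod k)"

lemma fold_coord_zero [simp]: "fold_coord k t c 0 = c"
  by (simp add: fold_coord_def)

lemma fold_coord_block:
  assumes "b < k"
  shows "fold_coord k t c (1 + k * q + b) = 1 + k * (t + (1 + t * k) * q + c) + b"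
  using assms by (simp add: fold_coord_def)

lemma block_position_cases:
  fixes k s :: nat
  assumes "k > 0"
  obtains "s = 0" | q b where "b < k" "s = 1 + k * q + b"
proof (cases s)
  case (Suc p)
  then have "s = 1 + k * (p div k) + p mod k"
    by simp
  with assms that(2)[of "p mod k" "p div k"] show ?thesis
    by simp
qed (use that(1) in simp)

lemma fold_coord_heads:
  assumes "c < 1 + t * k" "s \<noteq> 0"
  shows "c < fold_coord k t d s"
proof -
  have "t * k \<le> k * (t + (1 + t * k) * ((s - 1) div k) + d)"
    by (simp add: algebra_simps)
  moreover have "fold_coord k t d s = 1 + k * (t + (1 + t * k) * ((s - 1) div k) + d) + (s - 1) mod k"
    using assms(2) by (simp add: fold_coord_def)
  ultimately show ?thesis
    using assms(1) by linarith
qed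

lemma inj_on_fold_coord:
  assumes "k > 0"
  shows "inj_on (\<lambda>(c, s). fold_coord k t c s) ({..<1 + t * k} \<times> UNIV)"
proof (rule inj_onI, clarsimp)
  fix c s d e
  assume c: "c < Suc (t * k)" "d < Suc (t * k)" and eq: "fold_coord k t c s = fold_coord k t d e"
  show "c = d \<and> s = e"
  proof (cases s rule: block_position_cases[OF assms]; cases e rule: block_position_cases[OF assms])
    fix q b q' b'
    assume b: "b < k" "b' < k" and s: "s = 1 + k * q + b" "e = 1 + k * q' + b'"
    have "k * (t + (1 + t * k) * q + c) + b = k * (t + (1 + t * k) * q' + d) + b'"
      using eq fold_coord_block[OF b(1), of t c q] fold_coord_block[OF b(2), of t d q'] s
      by simp
    then have "(1 + t * k) * q + c = (1 + t * k) * q' + d \<and> b = b'"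
      using mult_add_eq_mult_add_iff[OF b] by simp
    then show ?thesis
      using mult_add_eq_mult_add_iff[of c "1 + t * k" d q q'] c s by simp
  next
    assume "s = 0" "e = 0"
    then show ?thesis
      using eq by simp
  next
    fix q b
    assume "s = 0" "e = 1 + k * q + b"
    then show ?thesis
      using eq fold_coord_heads[of c t k e d] c by simp
  next
    fix q b
    assume "s = 1 + k * q + b" "e = 0"
    then show ?thesis
      using eq fold_coord_heads[of d t k s c] c by simp
  qed
qed

lemma fold_coord_surj:
  assumes "k > 0"
  obtains c s where "c < 1 + t * k" "fold_coord k t c s = r"
proof (cases "r < 1 + t * k")
  case True
  then show ?thesis
    using that[of r 0] by (simp add: fold_coord_def)
next
  case False
  define N where "N = 1 + t * k"
  define Q where "Q = (r - 1) div k"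
  have "t * k div k \<le> Q"
    unfolding Q_def using False by (intro div_le_mono) simp
  then have "t + N * ((Q - t) div N) + (Q - t) mod N = Q"
    using assms by simp
  moreover have "1 + k * Q + (r - 1) mod k = r"
    using False by (simp add: Q_def)
  ultimately have "fold_coord k t ((Q - t) mod N) (1 + k * ((Q - t) div N) + (r - 1) mod k) = r"
    using fold_coord_block[of "(r - 1) mod k" k t "(Q - t) mod N" "(Q - t) div N"] assms
    by (simp add: N_def)
  moreover have "(Q - t) mod N < 1 + t * k"
    by (simp add: N_def)
  ultimately show ?thesis
    using that by blast
qed

definition fold_map :: "nat \<Rightarrow> nat \<Rightarrow> nat \<Rightarrow> nat \<times> nat \<Rightarrow> nat \<times> nat" where
  "fold_map k m t = (\<lambda>(l, s). if l < m - 1 then (l, s) else (m - 1, fold_coord k t (l - (m - 1)) s))"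

lemma block_preserving_fold_map: "block_preserving k n (fold_map k m t)"
  unfolding block_preserving_def
proof (intro allI impI)
  fix l q
  show "\<exists>i h. \<forall>b<k. fold_map k m t (l, 1 + k * q + b) = (i, 1 + k * h + b)"
  proof (cases "l < m - 1")
    case True
    then show ?thesis by (auto simp: fold_map_def)
  next
    case False
    then have "\<forall>b<k. fold_map k m t (l, 1 + k * q + b)
        = (m - 1, 1 + k * (t + (1 + t * k) * q + (l - (m - 1))) + b)"
      using fold_coord_block[of _ k t "l - (m - 1)" q] by (simp add: fold_map_def)
    then show ?thesis by blast
  qed
qed

lemma bij_fold_map:
  assumes "k > 0" "m > 0"
  shows "bij_betw (fold_map k m t) ({..<m + t * k} \<times> UNIV) ({..<m} \<times> UNIV)"
  unfolding bij_betw_def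
proof
  have inj_fold: "inj_on (\<lambda>(c, s). fold_coord k t c s) ({..<1 + t * k} \<times> UNIV)"
    using inj_on_fold_coord[OF assms(1)] .
  show "inj_on (fold_map k m t) ({..<m + t * k} \<times> UNIV)"
  proof (rule inj_onI, clarsimp)
    fix l s l' s'
    assume l: "l < m + t * k" "l' < m + t * k" and eq: "fold_map k m t (l, s) = fold_map k m t (l', s')"
    show "l = l' \<and> s = s'"
    proof (cases "l < m - 1"; cases "l' < m - 1")
      assume "\<not> l < m - 1" "\<not> l' < m - 1"
      moreover have "(l - (m - 1), s) = (l' - (m - 1), s')"
        using eq l assms(2) \<open>\<not> l < m - 1\<close> \<open>\<not> l' < m - 1\<close>
        by (intro inj_onD[OF inj_fold]) (auto simp: fold_map_def)
      ultimately show ?thesis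
        by (simp add: eq_diff_iff)
    qed (use eq in \<open>auto simp: fold_map_def\<close>)
  qed
  show "fold_map k m t ` ({..<m + t * k} \<times> UNIV) = {..<m} \<times> UNIV"
  proof (intro equalityI subsetI)
    fix x :: "nat \<times> nat"
    assume "x \<in> {..<m} \<times> UNIV"
    then obtain i r where x: "x = (i, r)" "i < m" by auto
    show "x \<in> fold_map k m t ` ({..<m + t * k} \<times> UNIV)"
    proof (cases "i < m - 1")
      case True
      then have "x = fold_map k m t (i, r)" by (simp add: x fold_map_def)
      then show ?thesis using x by auto
    next
      case False
      obtain c s where "c < 1 + t * k" "fold_coord k t c s = r"
        using fold_coord_surj[OF assms(1)] .
      then have "x = fold_map k m t (m - 1 + c, s)" "m - 1 + c < m + t * k"
        using False x by (auto simp: fold_map_def)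
      then show ?thesis by blast
    qed
  qed (use assms(2) in \<open>auto simp: fold_map_def split: if_splits\<close>)
qed

lemma free_iso_sym: "free_iso k m n \<Longrightarrow> free_iso k n m"
  unfolding free_iso_def by blast

lemma free_iso_add_mult:
  assumes "k > 0" "m > 0"
  shows "free_iso k m (m + t * k)"
  using free_iso_if_block_preserving_bij[OF bij_fold_map[OF assms] block_preserving_fold_map] .

theorem lemma1:
  fixes k m n :: nat
  assumes "k > 0" and "m > 0" and "n > 0" and "m mod k = n mod k"
  shows "free_iso k m n"
proof (cases "m \<le> n")
  case True
  then obtain t where "n = m + t * k"
    using mod_eq_nat1E[OF assms(4)[symmetric]] by (metis mult.commute)
  then show ?thesis
    using free_iso_add_mult[OF assms(1,2)] by simp
next
  case False
  then obtain t where "m = n + t * k"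
    using mod_eq_nat1E[OF assms(4)] by (metis mult.commute nat_le_linear)
  then show ?thesis
    using free_iso_sym[OF free_iso_add_mult[OF assms(1,3)]] by simp
qed

end
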